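(* Let $\tau\subset\mathbb{Z}^n_{\ge0}$ be a B-facet and let $E\subset\mathbb{R}^n$ be a coordinate subspace such that $E\cap\tau$ is a V-face of $\tau$ contained in $E$ (so $\dim E=\dim(E\cap\tau)+1$) which is not a B-face. Let $p_E:\mathbb{Z}^n\to\mathbb{Z}^{n-\dim E}$ be the projection forgetting the coordinates belonging to $E$. Then $p_E(\tau)\subset\mathbb{Z}^{n-\dim E}_{\ge0}$ is a B-polytope.
   Context: A polytope is a finite subset of $\mathbb{Z}^n$; its dimension is the dimension of its affine span; a face of a finite set $S$ is $S\cap G$ for a face $G$ of the convex hull of $S$. A $k$-simplex is a set of $k+1$ affinely independent points; a $k$-simplex $S\subset\mathbb{Z}^m_{\ge0}$ is a B-simplex if there is an index $i$ with exactly $k$ vertices in $\{x_i=0\}$ and the remaining vertex having $x_i=1$. A B-facet in $\mathbb{Z}^n_{\ge0}$ is a finite set $\tau\subset\mathbb{Z}^n_{\ge0}$ whose affine span is a hyperplane $\{\langle a,x\rangle=b\}$ with all $a_j>0$, such that every $(n-1)$-simplex with vertices in $\tau$ is a B-simplex. A coordinate subspace is the linear span of some standard basis vectors. A face $F$ of $\tau$ is a V-face if it is contained in a coordinate subspace $E$ with $\dim E=\dim F+1$; such $F$ is a B-face if every $(\dim F)$-simplex with vertices in $F$ is a B-simplex when regarded in $\mathbb{Z}^{\dim E}_{\ge0}$ via the coordinates of $E$. A B-polytope in $\mathbb{Z}^m_{\ge0}$ is a finite set $P\subset\mathbb{Z}^m_{\ge0}$ of dimension $m$ such that every $(m-1)$-simplex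 with vertices in $P$ either is a B-simplex or has affine span containing the origin. *)

theory Defs
  imports "HOL-Analysis.Analysis"
begin

text \<open>Points of Z^n are modelled as real vectors in real^'n with integer coordinates,
  n = CARD('n). For a set J of coordinates, lattice_orth J is the copy of Z^J_{>=0}
  (integer, nonnegative on J, zero off J).\<close>

definition lattice_orth :: "'n set \<Rightarrow> (real^'n) set" where
  "lattice_orth J = {x. (\<forall>i\<in>J. x$i \<in> \<int> \<and> x$i \<ge> 0) \<and> (\<forall>i. i \<notin> J \<longrightarrow> x$i = 0)}"

definition is_simplex :: "nat \<Rightarrow> (real^'n) set \<Rightarrow> bool" where
  "is_simplex k S \<longleftrightarrow> finite S \<and> card S = k + 1 \<and> \<not> affine_dependent S"

definition B_simplex :: "'n set \<Rightarrow> nat \<Rightarrow> (real^'n) set \<Rightarrow> bool" where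
  "B_simplex J k S \<longleftrightarrow> S \<subseteq> lattice_orth J \<and> is_simplex k S \<and>
     (\<exists>i\<in>J. card {v\<in>S. v$i = 0} = k \<and> (\<forall>v\<in>S. v$i \<noteq> 0 \<longrightarrow> v$i = 1))"

definition B_facet :: "(real^'n) set \<Rightarrow> bool" where
  "B_facet \<tau> \<longleftrightarrow> finite \<tau> \<and> \<tau> \<subseteq> lattice_orth UNIV \<and>
     (\<exists>a b. (\<forall>j. a$j > 0) \<and> affine hull \<tau> = {x. a \<bullet> x = b}) \<and>
     (\<forall>S. S \<subseteq> \<tau> \<and> is_simplex (CARD('n) - 1) S \<longrightarrow> B_simplex UNIV (CARD('n) - 1) S)"

definition face_of_set :: "(real^'n) set \<Rightarrow> (real^'n) set \<Rightarrow> bool" where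
  "face_of_set F P \<longleftrightarrow> (\<exists>G. G face_of convex hull P \<and> F = P \<inter> G)"

definition coord_subspace :: "'n set \<Rightarrow> (real^'n) set" where
  "coord_subspace S = span ((\<lambda>i. axis i 1) ` S)"

definition V_face_in :: "(real^'n) set \<Rightarrow> 'n set \<Rightarrow> (real^'n) set \<Rightarrow> bool" where
  "V_face_in \<tau> S F \<longleftrightarrow> face_of_set F \<tau> \<and> F \<subseteq> coord_subspace S \<and>
     int (dim (coord_subspace S)) = aff_dim F + 1"

definition B_face_in :: "(real^'n) set \<Rightarrow> 'n set \<Rightarrow> (real^'n) set \<Rightarrow> bool" where
  "B_face_in \<tau> S F \<longleftrightarrow> V_face_in \<tau> S F \<and>
     (\<forall>k T. int k = aff_dim F \<and> T \<subseteq> F \<and> is_simplex k T \<longrightarrow> B_simplex S k T)"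

definition B_polytope :: "'n set \<Rightarrow> (real^'n) set \<Rightarrow> bool" where
  "B_polytope J P \<longleftrightarrow> finite P \<and> P \<subseteq> lattice_orth J \<and> aff_dim P = int (card J) \<and>
     (\<forall>T. T \<subseteq> P \<and> is_simplex (card J - 1) T \<longrightarrow>
        B_simplex J (card J - 1) T \<or> 0 \<in> affine hull T)"

definition proj_forget :: "'n set \<Rightarrow> real^'n \<Rightarrow> real^'n" where
  "proj_forget S x = (\<chi> i. if i \<in> S then 0 else x$i)"

end

theory Submission
  imports Defs
begin

text \<open>
  Since E \<inter> \<tau> is not a B-face, it contains a k-simplex Q, k + 1 = dim E, that is not a
  B-simplex. Let T be a simplex of the projection whose affine span misses the origin; then T is
  linearly independent, and as the projection kills Q, any lift of T to \<tau> together with Q is an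
  (n-1)-simplex of \<tau>. That simplex is a B-simplex for some coordinate i, with a unique vertex w
  off x_i = 0. If i is not a coordinate of E, then w is not in Q and T is a B-simplex for the same
  coordinate. Otherwise either w is in Q, making Q a B-simplex, or Q is a set of k + 1 points in a
  coordinate subspace of dimension k; but Q is linearly independent because the affine span of a
  B-facet misses the origin.
\<close>

lemma coord_subspace_eq: "coord_subspace S = {x::real^'n. \<forall>i. i \<notin> S \<longrightarrow> x$i = 0}"
proof
  have "subspace {x::real^'n. \<forall>i. i \<notin> S \<longrightarrow> x$i = 0}"
    by (auto simp: subspace_def)
  then show "coord_subspace S \<subseteq> {x::real^'n. \<forall>i. i \<notin> S \<longrightarrow> x$i = 0}"
    unfolding coord_subspace_def by (intro span_minimal) (auto simp: axis_def)
next
  show "{x::real^'n. \<forall>i. i \<notin> S \<longrightarrow> x$i = 0} \<subseteq> coord_subspace S"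
  proof
    fix x :: "real^'n" assume x: "x \<in> {x. \<forall>i. i \<notin> S \<longrightarrow> x$i = 0}"
    have "x = (\<Sum>i\<in>S. x$i *\<^sub>R axis i 1)"
      using x by (auto simp: vec_eq_iff axis_def if_distrib[of "\<lambda>t. _ * t"] cong: if_cong)
    also have "\<dots> \<in> coord_subspace S"
      unfolding coord_subspace_def by (intro span_sum span_scale span_base) auto
    finally show "x \<in> coord_subspace S" .
  qed
qed

lemma dim_coord_subspace: "dim (coord_subspace S) = card S"
  unfolding coord_subspace_eq using dim_substandard_cart[of S] by (simp add: dim_vec_eq[symmetric])

lemma aff_dim_coord_subspace: "aff_dim (coord_subspace S) = int (card S)"
proof -
  have "subspace (coord_subspace S)"
    unfolding coord_subspace_def by (rule subspace_span)
  then show ?thesis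
    by (simp add: aff_dim_subspace dim_coord_subspace)
qed

lemma card_add_card_Diff_UNIV: "card (S :: 'a::finite set) + card (UNIV - S) = CARD('a)"
  using card_Un_disjoint[of S "UNIV - S"] by (simp add: Un_absorb1)

lemma card_le_if_independent_in_coord_subspace:
  "independent Q \<Longrightarrow> Q \<subseteq> coord_subspace S \<Longrightarrow> card Q \<le> card S"
  using independent_card_le_dim[of Q "coord_subspace S"] by (simp add: dim_coord_subspace)

lemma independent_if_affine_independent:
  fixes Q :: "'a::euclidean_space set"
  assumes "\<not> affine_dependent Q" "0 \<notin> affine hull Q"
  shows "independent Q"
proof -
  have "0 \<notin> Q"
    using assms(2) hull_inc by metis
  moreover have "\<not> affine_dependent (insert 0 Q)"
    by (rule affine_independent_insert[OF assms])
  ultimately show ?thesis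
    using affine_dependent_iff_dependent[of 0 Q] by simp
qed

lemma affine_independent_Un_kernel:
  fixes f :: "'a::euclidean_space \<Rightarrow> 'b::euclidean_space"
  assumes "linear f" "finite L" "finite Q" "inj_on f L" "independent (f ` L)"
    and "\<not> affine_dependent Q" "\<And>v. v \<in> Q \<Longrightarrow> f v = 0"
  shows "\<not> affine_dependent (L \<union> Q)"
proof
  have "0 \<notin> f ` L"
    using assms(5) dependent_zero by blast
  then have disj: "L \<inter> Q = {}"
    using assms(7) by (metis disjoint_iff imageI)
  assume "affine_dependent (L \<union> Q)"
  then obtain u where sum_u: "sum u (L \<union> Q) = 0" and nonzero: "\<exists>v\<in>L \<union> Q. u v \<noteq> 0"
    and comb: "(\<Sum>v\<in>L \<union> Q. u v *\<^sub>R v) = 0"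
    unfolding affine_dependent_explicit_finite[OF finite_UnI[OF assms(2,3)]] by blast
  have "(\<Sum>t\<in>f ` L. u (inv_into L f t) *\<^sub>R t) = (\<Sum>v\<in>L. u v *\<^sub>R f v)"
    using assms(4) by (simp add: sum.reindex)
  also have "\<dots> = f (\<Sum>v\<in>L \<union> Q. u v *\<^sub>R v)"
    using assms(2,3,7) disj
    by (simp add: sum.union_disjoint linear_add[OF assms(1)] linear_sum[OF assms(1)]
        linear_scale[OF assms(1)])
  also have "\<dots> = 0"
    using comb assms(1) linear_0 by simp
  finally have "\<forall>t\<in>f ` L. u (inv_into L f t) = 0"
    using assms(5) unfolding dependent_finite[OF finite_imageI[OF assms(2)]] by auto
  then have zero_L: "\<forall>v\<in>L. u v = 0"
    using assms(4) by auto
  then have "sum u Q = 0" "(\<Sum>v\<in>Q. u v *\<^sub>R v) = 0"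
    using sum_u comb disj assms(2,3) by (simp_all add: sum.union_disjoint)
  then have "\<forall>v\<in>Q. u v = 0"
    using assms(3,6) affine_dependent_explicit_finite by blast
  then show False
    using nonzero zero_L by blast
qed

lemma linear_proj_forget: "linear (proj_forget S)"
  by (rule linearI) (auto simp: proj_forget_def vec_eq_iff)

lemma proj_forget_nth: "i \<notin> S \<Longrightarrow> proj_forget S x $ i = x $ i"
  by (simp add: proj_forget_def)

lemma proj_forget_coord_subspace: "x \<in> coord_subspace S \<Longrightarrow> proj_forget S x = 0"
  by (auto simp: proj_forget_def vec_eq_iff coord_subspace_eq)

lemma proj_forget_lattice_orth: "proj_forget S ` lattice_orth UNIV \<subseteq> lattice_orth (UNIV - S)"
  by (auto simp: lattice_orth_def proj_forget_def)

lemma proj_forget_hyperplane: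
  fixes a :: "real^'n"
  assumes "s \<in> S" "a$s \<noteq> 0"
  shows "proj_forget S ` {x. a \<bullet> x = b} = coord_subspace (UNIV - S)"
proof
  show "proj_forget S ` {x. a \<bullet> x = b} \<subseteq> coord_subspace (UNIV - S)"
    by (auto simp: coord_subspace_eq proj_forget_def)
next
  show "coord_subspace (UNIV - S) \<subseteq> proj_forget S ` {x. a \<bullet> x = b}"
  proof
    fix y assume "y \<in> coord_subspace (UNIV - S)"
    then have y: "\<forall>i\<in>S. y$i = 0"
      by (auto simp: coord_subspace_eq)
    define x where "x = y + ((b - a \<bullet> y) / a$s) *\<^sub>R axis s 1"
    have "a \<bullet> x = b"
      using assms(2) by (simp add: x_def inner_add_right inner_axis)
    moreover have "proj_forget S x = y"
      using y assms(1) by (auto simp: proj_forget_def x_def vec_eq_iff axis_def)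
    ultimately show "y \<in> proj_forget S ` {x. a \<bullet> x = b}"
      by blast
  qed
qed

lemma unique_vertex_off_coord_hyperplane_iff:
  fixes S :: "(real^'n) set"
  assumes "finite S" "card S = Suc k"
  shows "card {v\<in>S. v$i = 0} = k \<and> (\<forall>v\<in>S. v$i \<noteq> 0 \<longrightarrow> v$i = 1) \<longleftrightarrow>
    (\<exists>w\<in>S. w$i = 1 \<and> (\<forall>v\<in>S. v \<noteq> w \<longrightarrow> v$i = 0))"
proof
  assume zeros: "card {v\<in>S. v$i = 0} = k \<and> (\<forall>v\<in>S. v$i \<noteq> 0 \<longrightarrow> v$i = 1)"
  have "card (S - {v\<in>S. v$i = 0}) = 1"
    using zeros assms by (simp add: card_Diff_subset)
  then obtain w where w: "S - {v\<in>S. v$i = 0} = {w}"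
    using card_1_singletonE by blast
  then have "w \<in> S" "w$i = 1"
    using zeros by auto
  moreover have "\<forall>v\<in>S. v \<noteq> w \<longrightarrow> v$i = 0"
    using w by blast
  ultimately show "\<exists>w\<in>S. w$i = 1 \<and> (\<forall>v\<in>S. v \<noteq> w \<longrightarrow> v$i = 0)"
    by blast
next
  assume "\<exists>w\<in>S. w$i = 1 \<and> (\<forall>v\<in>S. v \<noteq> w \<longrightarrow> v$i = 0)"
  then obtain w where w: "w \<in> S" "w$i = 1" "\<forall>v\<in>S. v \<noteq> w \<longrightarrow> v$i = 0"
    by blast
  then have "{v\<in>S. v$i = 0} = S - {w}"
    by force
  then have "card {v\<in>S. v$i = 0} = k"
    using w(1) assms by simp
  moreover have "\<forall>v\<in>S. v$i \<noteq> 0 \<longrightarrow> v$i = 1"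
    using w by metis
  ultimately show "card {v\<in>S. v$i = 0} = k \<and> (\<forall>v\<in>S. v$i \<noteq> 0 \<longrightarrow> v$i = 1)"
    by blast
qed

lemma B_simplex_iff:
  "B_simplex J k S \<longleftrightarrow> S \<subseteq> lattice_orth J \<and> is_simplex k S \<and>
     (\<exists>i\<in>J. \<exists>w\<in>S. w$i = 1 \<and> (\<forall>v\<in>S. v \<noteq> w \<longrightarrow> v$i = 0))"
proof -
  have "card {v\<in>S. v$i = 0} = k \<and> (\<forall>v\<in>S. v$i \<noteq> 0 \<longrightarrow> v$i = 1) \<longleftrightarrow>
      (\<exists>w\<in>S. w$i = 1 \<and> (\<forall>v\<in>S. v \<noteq> w \<longrightarrow> v$i = 0))"
    if "is_simplex k S" for i
    using that by (intro unique_vertex_off_coord_hyperplane_iff) (auto simp: is_simplex_def)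
  then show ?thesis
    unfolding B_simplex_def by blast
qed

lemma nonneg_eq_0_if_inner_positive_eq_0:
  fixes a x :: "real^'n"
  assumes "\<forall>j. a$j > 0" "\<forall>j. x$j \<ge> 0" "a \<bullet> x = 0"
  shows "x = 0"
proof -
  have "\<forall>j. a$j * x$j = 0"
    using assms by (subst (asm) inner_vec_def) (simp add: sum_nonneg_eq_0_iff less_imp_le)
  then show ?thesis
    using assms(1) by (auto simp: vec_eq_iff) (metis less_irrefl)
qed

lemma B_facet_zero_notin_affine_hull:
  fixes \<tau> :: "(real^'n) set"
  assumes "B_facet \<tau>" "2 \<le> CARD('n)"
  shows "0 \<notin> affine hull \<tau>"
proof
  assume zero: "0 \<in> affine hull \<tau>"
  obtain a b where a: "\<forall>j. a$j > 0" and hull: "affine hull \<tau> = {x. a \<bullet> x = b}"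
    using assms(1) unfolding B_facet_def by blast
  have "a \<noteq> 0"
    using a by (metis less_irrefl zero_index)
  then have "aff_dim \<tau> = int CARD('n) - 1"
    using aff_dim_affine_hull[of \<tau>] by (simp add: hull)
  moreover have "\<tau> \<subseteq> {0}"
  proof
    fix x assume "x \<in> \<tau>"
    moreover have "b = 0"
      using zero hull by simp
    ultimately have "a \<bullet> x = 0" "\<forall>j. x$j \<ge> 0"
      using hull assms(1) hull_inc[of x \<tau>] by (auto simp: B_facet_def lattice_orth_def)
    then show "x \<in> {0}"
      using nonneg_eq_0_if_inner_positive_eq_0 a by blast
  qed
  then have "aff_dim \<tau> \<le> 0"
    using aff_dim_subset[of \<tau> "{0}"] by simp
  ultimately show False
    using assms(2) by linarith
qed

lemma aff_dim_proj_forget_B_facet: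
  assumes "B_facet \<tau>" "S \<noteq> {}"
  shows "aff_dim (proj_forget S ` \<tau>) = int (card (UNIV - S))"
proof -
  obtain a b where a: "\<forall>j. a$j > 0" and hull: "affine hull \<tau> = {x. a \<bullet> x = b}"
    using assms(1) unfolding B_facet_def by blast
  obtain s where s: "s \<in> S"
    using assms(2) by blast
  have "affine hull (proj_forget S ` \<tau>) = proj_forget S ` (affine hull \<tau>)"
    using affine_hull_linear_image linear_proj_forget linear_conv_bounded_linear by metis
  also have "\<dots> = coord_subspace (UNIV - S)"
    unfolding hull using proj_forget_hyperplane[OF s] a by (metis less_irrefl)
  finally show ?thesis
    by (metis aff_dim_affine_hull aff_dim_coord_subspace)
qed

lemma B_facet_affine_independent_card_le:
  fixes \<tau> :: "(real^'n) set"
  assumes "B_facet \<tau>" "2 \<le> CARD('n)"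
    and "Q \<subseteq> \<tau>" "\<not> affine_dependent Q" "Q \<subseteq> coord_subspace S"
  shows "card Q \<le> card S"
proof -
  have "affine hull Q \<subseteq> affine hull \<tau>"
    using assms(3) by (rule hull_mono)
  then have "0 \<notin> affine hull Q"
    using B_facet_zero_notin_affine_hull[OF assms(1,2)] by blast
  then have "independent Q"
    using assms(4) by (rule independent_if_affine_independent[rotated])
  then show ?thesis
    using assms(5) by (rule card_le_if_independent_in_coord_subspace)
qed

lemma B_facet_simplex_in_coord_subspace_nonzero_coord:
  fixes \<tau> :: "(real^'n) set"
  assumes "B_facet \<tau>" "2 \<le> CARD('n)" "Q \<subseteq> \<tau> \<inter> coord_subspace S" "\<not> affine_dependent Q"
    and "card Q = card S" "i \<in> S"
  shows "\<exists>q\<in>Q. q$i \<noteq> 0"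
proof (rule ccontr)
  assume "\<not> (\<exists>q\<in>Q. q$i \<noteq> 0)"
  then have "Q \<subseteq> coord_subspace (S - {i})"
    using assms(3) by (auto simp: coord_subspace_eq)
  then have "card Q \<le> card (S - {i})"
    using B_facet_affine_independent_card_le assms(1-4) by blast
  with assms(5,6) show False
    using card_Diff1_less[of S i] by simp
qed

lemma proj_forget_lift_simplex:
  assumes "T \<subseteq> proj_forget S ` X" "finite T" "\<not> affine_dependent T" "0 \<notin> affine hull T"
    and "finite Q" "\<not> affine_dependent Q" "Q \<subseteq> coord_subspace S"
  obtains L where "L \<subseteq> X" "inj_on (proj_forget S) L" "proj_forget S ` L = T"
    "L \<inter> Q = {}" "\<not> affine_dependent (L \<union> Q)"
proof -
  obtain L where L: "L \<subseteq> X" "inj_on (proj_forget S) L" "proj_forget S ` L = T"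
    using assms(1) subset_image_inj by metis
  have kernel: "\<And>v. v \<in> Q \<Longrightarrow> proj_forget S v = 0"
    using assms(7) proj_forget_coord_subspace by blast
  have "finite L"
    using L(2,3) assms(2) finite_image_iff by blast
  moreover have "independent T"
    using assms(3,4) by (rule independent_if_affine_independent)
  ultimately have "\<not> affine_dependent (L \<union> Q)"
    using affine_independent_Un_kernel[OF linear_proj_forget] L(2,3) assms(5,6) kernel by blast
  moreover have "L \<inter> Q = {}"
    using L(3) kernel assms(4) hull_inc by (metis disjoint_iff imageI)
  ultimately show thesis
    using that L by blast
qed

lemma B_facet_lift_simplex:
  fixes \<tau> :: "(real^'n) set"
  assumes facet: "B_facet \<tau>"
    and Q: "Q \<subseteq> \<tau> \<inter> coord_subspace S" "finite Q" "\<not> affine_dependent Q" "card Q = card S"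
    and T: "T \<subseteq> proj_forget S ` \<tau>" "finite T" "\<not> affine_dependent T" "card T = card (UNIV - S)"
      "0 \<notin> affine hull T"
  obtains L i w where "proj_forget S ` L = T" "w \<in> L \<union> Q" "w$i = 1"
    "\<forall>v\<in>L \<union> Q. v \<noteq> w \<longrightarrow> v$i = 0"
proof -
  obtain L where L: "L \<subseteq> \<tau>" "inj_on (proj_forget S) L" "proj_forget S ` L = T"
    and disj: "L \<inter> Q = {}" and indep: "\<not> affine_dependent (L \<union> Q)"
    using proj_forget_lift_simplex[OF T(1,2,3,5) Q(2,3)] Q(1) by blast
  have "finite L" "card L = card T"
    using L(2,3) T(2) by (auto simp: finite_image_iff card_image)
  then have "card (L \<union> Q) = CARD('n)"
    using disj Q(2,4) T(4) card_add_card_Diff_UNIV[of S] by (simp add: card_Un_disjoint)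
  then have "is_simplex (CARD('n) - 1) (L \<union> Q)"
    using \<open>finite L\<close> Q(2) indep by (simp add: is_simplex_def)
  moreover have "L \<union> Q \<subseteq> \<tau>"
    using L(1) Q(1) by blast
  ultimately have "B_simplex UNIV (CARD('n) - 1) (L \<union> Q)"
    using facet unfolding B_facet_def by blast
  then show thesis
    using that L(3) unfolding B_simplex_iff by blast
qed

lemma B_facet_not_B_simplex_imp_proper:
  assumes "B_facet \<tau>" "Q \<subseteq> \<tau>" "is_simplex k Q" "\<not> B_simplex S k Q" "card S = Suc k"
  shows "S \<noteq> UNIV"
proof
  assume "S = UNIV"
  then have "B_simplex UNIV k Q"
    using assms unfolding B_facet_def by simp
  with assms(4) \<open>S = UNIV\<close> show False
    by simp
qed

lemma B_simplex_proj_forget: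
  fixes \<tau> :: "(real^'n) set"
  assumes facet: "B_facet \<tau>"
    and Q: "Q \<subseteq> \<tau> \<inter> coord_subspace S" "is_simplex k Q" "\<not> B_simplex S k Q" "card S = Suc k"
    and T: "T \<subseteq> proj_forget S ` \<tau>" "is_simplex (card (UNIV - S) - 1) T" "0 \<notin> affine hull T"
  shows "B_simplex (UNIV - S) (card (UNIV - S) - 1) T"
proof -
  have lattice: "\<tau> \<subseteq> lattice_orth UNIV"
    using facet unfolding B_facet_def by blast
  have "finite Q" and card_Q: "card Q = card S" and "\<not> affine_dependent Q"
    using Q(2,4) by (auto simp: is_simplex_def)
  have "S \<noteq> UNIV"
    using B_facet_not_B_simplex_imp_proper facet Q by blast
  then have "card (UNIV - S) \<noteq> 0"
    by (metis Diff_eq_empty_iff card_0_eq finite subset_antisym subset_UNIV)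
  moreover have "finite T" "\<not> affine_dependent T" "card T = Suc (card (UNIV - S) - 1)"
    using T(2) by (simp_all add: is_simplex_def)
  ultimately obtain L i w where L: "proj_forget S ` L = T" and w: "w \<in> L \<union> Q" "w$i = 1"
    and others: "\<forall>v\<in>L \<union> Q. v \<noteq> w \<longrightarrow> v$i = 0"
    using B_facet_lift_simplex[OF facet Q(1) \<open>finite Q\<close> \<open>\<not> affine_dependent Q\<close> card_Q T(1)
        _ _ _ T(3)] by (metis Suc_pred' not_gr0)
  consider (outside) "i \<notin> S" | (vertex_in_Q) "i \<in> S" "w \<in> Q" | (vertex_in_L) "i \<in> S" "w \<notin> Q"
    by blast
  then show ?thesis
  proof cases
    case outside
    then have "w \<in> L"
      using w Q(1) by (auto simp: coord_subspace_eq)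
    moreover have "T \<subseteq> lattice_orth (UNIV - S)"
      using T(1) lattice proj_forget_lattice_orth by (meson image_mono order_trans)
    ultimately show ?thesis
      unfolding B_simplex_iff using T(2) outside w(2) others L
      by (auto simp: proj_forget_nth intro!: bexI[of _ i] bexI[of _ "proj_forget S w"])
  next
    case vertex_in_Q
    have "Q \<subseteq> lattice_orth S"
      using Q(1) lattice by (auto simp: lattice_orth_def coord_subspace_eq)
    then have "B_simplex S k Q"
      unfolding B_simplex_iff using Q(2) vertex_in_Q w(2) others by blast
    with Q(3) show ?thesis
      by blast
  next
    case vertex_in_L
    have "2 \<le> CARD('n)"
      using card_add_card_Diff_UNIV[of S] Q(4) \<open>card (UNIV - S) \<noteq> 0\<close> by linarith
    then obtain q where "q \<in> Q" "q$i \<noteq> 0"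
      using B_facet_simplex_in_coord_subspace_nonzero_coord facet Q(1) \<open>\<not> affine_dependent Q\<close>
        card_Q vertex_in_L(1) by blast
    with others vertex_in_L(2) show ?thesis
      by auto
  qed
qed

theorem lemma3p3:
  fixes \<tau> :: "(real^'n) set" and S :: "'n set"
  assumes "B_facet \<tau>"
    and "V_face_in \<tau> S (coord_subspace S \<inter> \<tau>)"
    and "\<not> B_face_in \<tau> S (coord_subspace S \<inter> \<tau>)"
  shows "B_polytope (UNIV - S) (proj_forget S ` \<tau>)"
proof -
  obtain k Q where k: "int k = aff_dim (coord_subspace S \<inter> \<tau>)"
    and Q: "Q \<subseteq> \<tau> \<inter> coord_subspace S" "is_simplex k Q" "\<not> B_simplex S k Q"
    using assms(2,3) unfolding B_face_in_def by blast
  have card_S: "card S = Suc k"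
    using assms(2) k unfolding V_face_in_def dim_coord_subspace by linarith
  then have "S \<noteq> {}"
    by auto
  have "finite \<tau>" "\<tau> \<subseteq> lattice_orth UNIV"
    using assms(1) unfolding B_facet_def by blast+
  then show ?thesis
    unfolding B_polytope_def
    using proj_forget_lattice_orth[of S] aff_dim_proj_forget_B_facet[OF assms(1) \<open>S \<noteq> {}\<close>]
      B_simplex_proj_forget[OF assms(1) Q card_S]
    by auto
qed

end
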